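(* Any instance of \textsc{Virtual Edge Steiner Tree} with $k$ terminals and $\ell$ virtual edges can be reduced to $4^{\ell}$ instances of \textsc{Steiner Tree}, each with at most $k+2\ell$ terminals; that is, the minimum total cost of the \textsc{Virtual Edge Steiner Tree} instance is obtained as the minimum, over these $4^\ell$ instances, of the optimum of the \textsc{Steiner Tree} instance plus the corresponding virtual edge weights.
   Context: \textsc{Steiner Tree}: given a graph with nonnegative edge weights and a terminal set $T$, find a minimum-weight edge set connecting all terminals. \textsc{Virtual Edge Steiner Tree}: the input is a graph $G=(V,E)$ (parallel edges allowed, no loops) with weights $w_e\in\mathbb{R}_{\ge0}$ for $e\in E$, a set of terminals $T\subseteq V$, and a set $E^*$ of ``virtual edges'' (pairs $\{u,v\}$ of vertices, with $E\cap E^*=\emptyset$), each virtual edge $e^*=\{u,v\}$ having a weight function $w_{e^*}:\{u,v,\mathsf{d},\mathsf{c}\}\to\mathbb{R}_{\ge0}$. A solution is a set $S\subseteq E\cup E^*$ forming a tree (Steiner tree) with $T\subseteq V(S)$ and $V(S)\cap e^*\neq\emptyset$ for each $e^*\in E^*$, where $V(S)$ is the set of vertices covered by $S$. The cost $c_{e^*}(S)$ of $e^*=\{u,v\}$ is $w_{e^*}(u)$ if $u\in V(S),v\notin V(S)$; $w_{e^*}(v)$ if $v\in V(S),u\notin V(S)$; $w_{e^*}(\mathsf{c})$ if $e^*\in S$; and $w_{e^*}(\mathsf{d})$ if $u,v\in V(S)$ and $e^*\notin S$. The total cost is $c(S)=\sum_{e\in S\cap E}w_e+\sum_{e^*\in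 E^*}c_{e^*}(S)$, to be minimized. *)

theory Defs
  imports Main "HOL-Library.FuncSet" "HOL-Library.Extended_Real"
begin

text \<open>A multigraph is given by a vertex set V, an edge set E (edges are abstract
  objects, so parallel edges are allowed) and an endpoint map ends; no loops.\<close>

definition multigraph :: "'v set \<Rightarrow> 'e set \<Rightarrow> ('e \<Rightarrow> 'v set) \<Rightarrow> bool" where
  "multigraph V E ends \<longleftrightarrow> finite V \<and> finite E \<and>
     (\<forall>e\<in>E. ends e \<subseteq> V \<and> card (ends e) = 2)"

definition adj :: "('e \<Rightarrow> 'v set) \<Rightarrow> 'e set \<Rightarrow> ('v \<times> 'v) set" where
  "adj ends S = {(x, y). \<exists>e\<in>S. ends e = {x, y}}"

definition has_cycle :: "('e \<Rightarrow> 'v set) \<Rightarrow> 'e set \<Rightarrow> bool" where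
  "has_cycle ends S \<longleftrightarrow> (\<exists>es vs. length es = length vs \<and> length vs \<ge> 2 \<and>
     distinct es \<and> distinct vs \<and> set es \<subseteq> S \<and>
     (\<forall>i<length vs. ends (es ! i) = {vs ! i, vs ! (Suc i mod length vs)}))"

definition is_tree :: "('e \<Rightarrow> 'v set) \<Rightarrow> 'v set \<Rightarrow> 'e set \<Rightarrow> bool" where
  "is_tree ends U S \<longleftrightarrow> finite U \<and> U \<noteq> {} \<and> finite S \<and> (\<forall>e\<in>S. ends e \<subseteq> U) \<and>
     (\<forall>x\<in>U. \<forall>y\<in>U. (x, y) \<in> (adj ends S)\<^sup>*) \<and> \<not> has_cycle ends S"

definition steiner_tree ::
  "'v set \<Rightarrow> 'e set \<Rightarrow> ('e \<Rightarrow> 'v set) \<Rightarrow> 'v set \<Rightarrow> 'v set \<Rightarrow> 'e set \<Rightarrow> bool" where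
  "steiner_tree V E ends T U S \<longleftrightarrow> is_tree ends U S \<and> U \<subseteq> V \<and> S \<subseteq> E \<and> T \<subseteq> U"

text \<open>Optimum of a Steiner Tree instance (infinity if infeasible).\<close>
definition st_opt ::
  "'v set \<Rightarrow> 'e set \<Rightarrow> ('e \<Rightarrow> 'v set) \<Rightarrow> ('e \<Rightarrow> real) \<Rightarrow> 'v set \<Rightarrow> ereal" where
  "st_opt V E ends w T =
     (INF US \<in> {(U, S). steiner_tree V E ends T U S}. ereal (\<Sum>e\<in>snd US. w e))"

text \<open>The four states of a virtual edge {u,v}: Side u, Side v, Dis (= d), Con (= c).\<close>
datatype 'v vstate = Side 'v | Dis | Con

definition vstate_of :: "('e \<Rightarrow> 'v set) \<Rightarrow> 'v set \<Rightarrow> 'e set \<Rightarrow> 'e \<Rightarrow> 'v vstate" where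
  "vstate_of ends U S e =
     (if e \<in> S then Con else if ends e \<subseteq> U then Dis else Side (THE x. x \<in> ends e \<inter> U))"

definition vest_solution ::
  "'v set \<Rightarrow> 'e set \<Rightarrow> 'e set \<Rightarrow> ('e \<Rightarrow> 'v set) \<Rightarrow> 'v set \<Rightarrow> 'v set \<Rightarrow> 'e set \<Rightarrow> bool" where
  "vest_solution V E Es ends T U S \<longleftrightarrow> is_tree ends U S \<and> U \<subseteq> V \<and> S \<subseteq> E \<union> Es \<and>
     T \<subseteq> U \<and> (\<forall>e\<in>Es. ends e \<inter> U \<noteq> {})"

definition vest_cost ::
  "'e set \<Rightarrow> 'e set \<Rightarrow> ('e \<Rightarrow> 'v set) \<Rightarrow> ('e \<Rightarrow> real) \<Rightarrow> ('e \<Rightarrow> 'v vstate \<Rightarrow> real)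
     \<Rightarrow> 'v set \<Rightarrow> 'e set \<Rightarrow> real" where
  "vest_cost E Es ends w wv U S =
     (\<Sum>e\<in>S \<inter> E. w e) + (\<Sum>e\<in>Es. wv e (vstate_of ends U S e))"

definition vest_opt ::
  "'v set \<Rightarrow> 'e set \<Rightarrow> 'e set \<Rightarrow> ('e \<Rightarrow> 'v set) \<Rightarrow> ('e \<Rightarrow> real) \<Rightarrow> ('e \<Rightarrow> 'v vstate \<Rightarrow> real)
     \<Rightarrow> 'v set \<Rightarrow> ereal" where
  "vest_opt V E Es ends w wv T =
     (INF US \<in> {(U, S). vest_solution V E Es ends T U S}.
        ereal (vest_cost E Es ends w wv (fst US) (snd US)))"

definition assignments :: "('e \<Rightarrow> 'v set) \<Rightarrow> 'e set \<Rightarrow> ('e \<Rightarrow> 'v vstate) set" where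
  "assignments ends Es = (\<Pi>\<^sub>E e\<in>Es. Side ` ends e \<union> {Dis, Con})"

definition con_edges :: "'e set \<Rightarrow> ('e \<Rightarrow> 'v vstate) \<Rightarrow> 'e set" where
  "con_edges Es \<sigma> = {e\<in>Es. \<sigma> e = Con}"

text \<open>Contraction class of a vertex: component w.r.t. the virtual edges in state Con.\<close>
definition cls :: "('e \<Rightarrow> 'v set) \<Rightarrow> 'e set \<Rightarrow> ('e \<Rightarrow> 'v vstate) \<Rightarrow> 'v \<Rightarrow> 'v set" where
  "cls ends Es \<sigma> x = (adj ends (con_edges Es \<sigma>))\<^sup>* `` {x}"

text \<open>Vertices that must be absent (the other endpoint of a virtual edge in state Side x).\<close>
definition deleted :: "('e \<Rightarrow> 'v set) \<Rightarrow> 'e set \<Rightarrow> ('e \<Rightarrow> 'v vstate) \<Rightarrow> 'v set" where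
  "deleted ends Es \<sigma> = {y. \<exists>e\<in>Es. \<exists>x. \<sigma> e = Side x \<and> y \<in> ends e \<and> y \<noteq> x}"

definition virt_terms :: "('e \<Rightarrow> 'v set) \<Rightarrow> 'e set \<Rightarrow> ('e \<Rightarrow> 'v vstate) \<Rightarrow> 'v set" where
  "virt_terms ends Es \<sigma> = (\<Union>e\<in>Es. case \<sigma> e of Side x \<Rightarrow> {x} | _ \<Rightarrow> ends e)"

definition red_V :: "'v set \<Rightarrow> ('e \<Rightarrow> 'v set) \<Rightarrow> 'e set \<Rightarrow> ('e \<Rightarrow> 'v vstate) \<Rightarrow> 'v set set" where
  "red_V V ends Es \<sigma> =
     (if has_cycle ends (con_edges Es \<sigma>) then {}
      else {cls ends Es \<sigma> x | x. x \<in> V \<and> cls ends Es \<sigma> x \<inter> deleted ends Es \<sigma> = {}})"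

definition red_ends :: "('e \<Rightarrow> 'v set) \<Rightarrow> 'e set \<Rightarrow> ('e \<Rightarrow> 'v vstate) \<Rightarrow> 'e \<Rightarrow> 'v set set" where
  "red_ends ends Es \<sigma> e = cls ends Es \<sigma> ` ends e"

definition red_E ::
  "'v set \<Rightarrow> 'e set \<Rightarrow> ('e \<Rightarrow> 'v set) \<Rightarrow> 'e set \<Rightarrow> ('e \<Rightarrow> 'v vstate) \<Rightarrow> 'e set" where
  "red_E V E ends Es \<sigma> =
     {e\<in>E. card (red_ends ends Es \<sigma> e) = 2 \<and> red_ends ends Es \<sigma> e \<subseteq> red_V V ends Es \<sigma>}"

definition red_T :: "'v set \<Rightarrow> ('e \<Rightarrow> 'v set) \<Rightarrow> 'e set \<Rightarrow> ('e \<Rightarrow> 'v vstate) \<Rightarrow> 'v set set" where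
  "red_T T ends Es \<sigma> = cls ends Es \<sigma> ` (T \<union> virt_terms ends Es \<sigma>)"

end

theory Submission
  imports Defs
begin

(*
  Guess the state sigma(e) in {u, v, d, c} of every virtual edge e = {u, v}. Once sigma is
  fixed, the virtual edges cost the constant sum_e w_e(sigma(e)), and what remains is an
  ordinary Steiner tree problem: contract the virtual edges in state c, delete the endpoint
  excluded by a state u or v, and make terminals of all endpoints that sigma forces into the
  tree (at most 2 per virtual edge). Contracting a solution whose states are sigma yields a
  connected subgraph of the reduced instance spanning its terminals; conversely, expanding a
  reduced Steiner tree and adding the contracted virtual edges yields a connected subgraph
  whose states are exactly sigma. In both directions a tree is recovered by deleting edges on
  cycles, never contracted virtual edges, and with nonnegative weights this does not increase
  the cost.
*)

section \<open>Connectivity and cycles\<close>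

lemma sym_adj: "sym (adj ends S)"
  unfolding adj_def sym_def by (auto simp: insert_commute)

lemma rtrancl_adj_sym: "(x, y) \<in> (adj ends S)\<^sup>* \<Longrightarrow> (y, x) \<in> (adj ends S)\<^sup>*"
  using sym_rtrancl[OF sym_adj] by (rule symD)

lemma adj_mono: "A \<subseteq> B \<Longrightarrow> adj ends A \<subseteq> adj ends B"
  unfolding adj_def by auto

lemma rtrancl_adj_mono: "A \<subseteq> B \<Longrightarrow> (x, y) \<in> (adj ends A)\<^sup>* \<Longrightarrow> (x, y) \<in> (adj ends B)\<^sup>*"
  using rtrancl_mono[OF adj_mono] by blast

lemma has_cycle_mono: "has_cycle ends A \<Longrightarrow> A \<subseteq> B \<Longrightarrow> has_cycle ends B"
  unfolding has_cycle_def by blast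

lemma not_has_cycle_empty: "\<not> has_cycle ends {}"
  unfolding has_cycle_def by auto

lemma rtrancl_map:
  assumes "\<And>a b. (a, b) \<in> R \<Longrightarrow> (f a, f b) \<in> Q\<^sup>*" and "(x, y) \<in> R\<^sup>*"
  shows "(f x, f y) \<in> Q\<^sup>*"
  using assms(2) by induction (auto intro: rtrancl_trans assms(1))

lemma rtrancl_reflect:
  assumes lift: "\<And>A B. (A, B) \<in> Q \<Longrightarrow> \<exists>p q. A = f p \<and> B = f q \<and> (p, q) \<in> R\<^sup>*"
    and fibre: "\<And>p q. f p = f q \<Longrightarrow> (p, q) \<in> R\<^sup>*"
    and path: "(f x, f y) \<in> Q\<^sup>*"
  shows "(x, y) \<in> R\<^sup>*"
proof -
  have "\<And>y. B = f y \<Longrightarrow> (x, y) \<in> R\<^sup>*" if "(f x, B) \<in> Q\<^sup>*" for B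
    using that
  proof induction
    case base
    then show ?case by (rule fibre)
  next
    case (step B B')
    obtain p q where pq: "B = f p" "B' = f q" "(p, q) \<in> R\<^sup>*" using lift[OF step(2)] by blast
    have "(x, p) \<in> R\<^sup>*" using step.IH pq(1) by blast
    moreover have "(q, y) \<in> R\<^sup>*" using fibre pq(2) step.prems by metis
    ultimately show ?case using pq(3) by (meson rtrancl_trans)
  qed
  with path show ?thesis by blast
qed

lemma rtrancl_consecutive:
  assumes "\<And>m. j \<le> m \<Longrightarrow> m < k \<Longrightarrow> (f m, f (Suc m)) \<in> R" and "j \<le> k"
  shows "(f j, f k) \<in> R\<^sup>*"
  using assms
proof (induction k)
  case (Suc k)
  then show ?case
    by (cases "j = Suc k") (auto intro: rtrancl_into_rtrancl simp: le_Suc_eq)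
qed simp

lemma cycle_edge_redundant:
  assumes "length es = length vs" and "distinct es" and "i < length vs"
    and cycle: "\<forall>j<length vs. ends (es ! j) = {vs ! j, vs ! (Suc j mod length vs)}"
  shows "(vs ! i, vs ! (Suc i mod length vs)) \<in> (adj ends (set es - {es ! i}))\<^sup>*"
proof -
  define n where "n = length vs"
  define R where "R = adj ends (set es - {es ! i})"
  have edge: "(vs ! j, vs ! (Suc j mod n)) \<in> R" if "j < n" "j \<noteq> i" for j
  proof -
    have "es ! j \<in> set es - {es ! i}"
      using assms that by (auto simp: n_def nth_eq_iff_index_eq)
    then show ?thesis using cycle that unfolding R_def adj_def n_def by auto
  qed
  have "(vs ! m, vs ! Suc m) \<in> R" if "m < i" for m
    using edge[of m] that assms(3) by (simp add: n_def)
  then have "(vs ! 0, vs ! i) \<in> R\<^sup>*"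
    by (intro rtrancl_consecutive) auto
  moreover have "(vs ! (Suc i mod n), vs ! 0) \<in> R\<^sup>*"
  proof (cases "Suc i < n")
    case True
    have "(vs ! m, vs ! Suc m) \<in> R" if "Suc i \<le> m" "m < n - 1" for m
      using edge[of m] that by simp
    then have "(vs ! Suc i, vs ! (n - 1)) \<in> R\<^sup>*"
      by (intro rtrancl_consecutive) (use True in auto)
    moreover have "(vs ! (n - 1), vs ! 0) \<in> R"
      using edge[of "n - 1"] True by simp
    ultimately show ?thesis using True by auto
  next
    case False
    then have "Suc i = n" using assms(3) by (simp add: n_def)
    then show ?thesis by simp
  qed
  ultimately show ?thesis
    unfolding R_def n_def by (meson rtrancl_adj_sym rtrancl_trans)
qed

lemma has_cycle_redundant_edge:
  assumes "has_cycle ends S" and "\<not> has_cycle ends K" and "K \<subseteq> S"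
  obtains e where "e \<in> S - K" and "adj ends S \<subseteq> (adj ends (S - {e}))\<^sup>*"
proof -
  obtain es vs where len: "length es = length vs" "length vs \<ge> 2"
    and dist: "distinct es" "distinct vs" and es: "set es \<subseteq> S"
    and cycle: "\<forall>j<length vs. ends (es ! j) = {vs ! j, vs ! (Suc j mod length vs)}"
    using assms(1) unfolding has_cycle_def by blast
  have "\<not> set es \<subseteq> K"
    using assms(2) len dist cycle unfolding has_cycle_def by blast
  then obtain i where i: "i < length vs" "es ! i \<notin> K"
    using len(1) by (metis in_set_conv_nth subsetI)
  let ?e = "es ! i" and ?u = "vs ! i" and ?v = "vs ! (Suc i mod length vs)"
  have "(?u, ?v) \<in> (adj ends (S - {?e}))\<^sup>*"
    using es by (intro rtrancl_adj_mono[OF _ cycle_edge_redundant[OF len(1) dist(1) i(1) cycle]])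
      blast
  then have uv: "{(?u, ?v), (?v, ?u)} \<subseteq> (adj ends (S - {?e}))\<^sup>*"
    by (auto intro: rtrancl_adj_sym)
  have "adj ends S \<subseteq> (adj ends (S - {?e}))\<^sup>*"
  proof (rule subrelI)
    fix a b assume "(a, b) \<in> adj ends S"
    then obtain e' where e': "e' \<in> S" "ends e' = {a, b}" unfolding adj_def by auto
    show "(a, b) \<in> (adj ends (S - {?e}))\<^sup>*"
    proof (cases "e' = ?e")
      case True
      then have "{a, b} = {?u, ?v}" using e' cycle i by auto
      then show ?thesis using uv by (auto simp: doubleton_eq_iff)
    next
      case False
      then show ?thesis using e' unfolding adj_def by auto
    qed
  qed
  moreover have "?e \<in> S - K" using es i len(1) by auto
  ultimately show thesis using that by blast
qed

lemma acyclic_connected_subset: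
  assumes "finite S" and "K \<subseteq> S" and "\<not> has_cycle ends K"
  obtains S0 where "K \<subseteq> S0" "S0 \<subseteq> S" "(adj ends S)\<^sup>* \<subseteq> (adj ends S0)\<^sup>*"
    "\<not> has_cycle ends S0"
  using assms
proof (induction "card S" arbitrary: S thesis rule: less_induct)
  case less
  show ?case
  proof (cases "has_cycle ends S")
    case False
    then show ?thesis using less.prems(1,3) by blast
  next
    case True
    then obtain e where e: "e \<in> S - K" and conn: "adj ends S \<subseteq> (adj ends (S - {e}))\<^sup>*"
      using has_cycle_redundant_edge less.prems(3,4) by blast
    have "card (S - {e}) < card S" using e less.prems(2) by (meson DiffD1 card_Diff1_less)
    then obtain S0 where "K \<subseteq> S0" "S0 \<subseteq> S - {e}" "(adj ends (S - {e}))\<^sup>* \<subseteq> (adj ends S0)\<^sup>*"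
      "\<not> has_cycle ends S0"
      using less.hyps[of "S - {e}"] less.prems(2-4) e by blast
    moreover have "(adj ends S)\<^sup>* \<subseteq> (adj ends (S - {e}))\<^sup>*"
      using conn by (rule rtrancl_subset_rtrancl)
    ultimately show ?thesis using less.prems(1) by blast
  qed
qed

lemma spanning_tree_subset:
  assumes "finite U" and "U \<noteq> {}" and "finite S" and "\<forall>e\<in>S. ends e \<subseteq> U"
    and "\<forall>x\<in>U. \<forall>y\<in>U. (x, y) \<in> (adj ends S)\<^sup>*"
    and "K \<subseteq> S" and "\<not> has_cycle ends K"
  obtains S0 where "K \<subseteq> S0" and "S0 \<subseteq> S" and "is_tree ends U S0"
proof -
  obtain S0 where S0: "K \<subseteq> S0" "S0 \<subseteq> S" "(adj ends S)\<^sup>* \<subseteq> (adj ends S0)\<^sup>*" "\<not> has_cycle ends S0"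
    using assms(3,6,7) by (rule acyclic_connected_subset)
  have "finite S0" using S0(2) assms(3) by (rule finite_subset)
  moreover have "\<forall>x\<in>U. \<forall>y\<in>U. (x, y) \<in> (adj ends S0)\<^sup>*" using assms(5) S0(3) by blast
  ultimately have "is_tree ends U S0"
    using assms(1,2,4) S0(2,4) unfolding is_tree_def by blast
  with S0(1,2) show thesis by (rule that)
qed

section \<open>Contraction classes and states of virtual edges\<close>

lemma cls_mem: "y \<in> cls ends Es \<sigma> x \<longleftrightarrow> (x, y) \<in> (adj ends (con_edges Es \<sigma>))\<^sup>*"
  unfolding cls_def by simp

lemma cls_refl: "x \<in> cls ends Es \<sigma> x"
  unfolding cls_mem by simp

lemma cls_eq: "y \<in> cls ends Es \<sigma> x \<Longrightarrow> cls ends Es \<sigma> y = cls ends Es \<sigma> x"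
  unfolding cls_def by (auto dest: rtrancl_adj_sym intro: rtrancl_trans)

lemma rtrancl_con_edges_if_cls_eq:
  "cls ends Es \<sigma> p = cls ends Es \<sigma> q \<Longrightarrow> (p, q) \<in> (adj ends (con_edges Es \<sigma>))\<^sup>*"
  by (metis cls_mem cls_refl)

lemma cls_subset:
  assumes "x \<in> U" and "\<forall>e\<in>con_edges Es \<sigma>. ends e \<subseteq> U"
  shows "cls ends Es \<sigma> x \<subseteq> U"
proof
  fix y assume "y \<in> cls ends Es \<sigma> x"
  then have "(x, y) \<in> (adj ends (con_edges Es \<sigma>))\<^sup>*" by (simp add: cls_mem)
  then show "y \<in> U"
    by induction (use assms in \<open>auto simp: adj_def\<close>)
qed

lemma vstate_of_Side:
  "e \<notin> S \<Longrightarrow> ends e = {x, y} \<Longrightarrow> x \<in> U \<Longrightarrow> y \<notin> U \<Longrightarrow> vstate_of ends U S e = Side x"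
  unfolding vstate_of_def by (cases "x = y") auto

lemma vstate_of_cases:
  assumes "card (ends e) = 2" and "ends e \<inter> U \<noteq> {}"
  obtains (Con) "e \<in> S" "vstate_of ends U S e = Con"
  | (Dis) "e \<notin> S" "ends e \<subseteq> U" "vstate_of ends U S e = Dis"
  | (Side) x y where "ends e = {x, y}" "x \<in> U" "y \<notin> U" "e \<notin> S"
      "vstate_of ends U S e = Side x"
proof -
  obtain x y where xy: "ends e = {x, y}" "x \<noteq> y"
    using assms(1) by (meson card_2_iff)
  consider "e \<in> S" | "e \<notin> S" "ends e \<subseteq> U" | "e \<notin> S" "x \<in> U" "y \<notin> U"
    | "e \<notin> S" "y \<in> U" "x \<notin> U"
    using assms(2) xy by auto
  then show thesis
  proof cases
    case 1
    then show thesis using Con by (simp add: vstate_of_def)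
  next
    case 2
    then show thesis using Dis by (simp add: vstate_of_def)
  next
    case 3
    then have "vstate_of ends U S e = Side x" using xy(1) by (intro vstate_of_Side)
    then show thesis using Side[of x y] 3 xy by blast
  next
    case 4
    have "ends e = {y, x}" using xy by blast
    then have "vstate_of ends U S e = Side y" using 4 by (intro vstate_of_Side)
    then show thesis using Side[of y x] 4 \<open>ends e = {y, x}\<close> by blast
  qed
qed

abbreviation reduced_steiner_tree ::
  "'v set \<Rightarrow> 'e set \<Rightarrow> 'e set \<Rightarrow> ('e \<Rightarrow> 'v set) \<Rightarrow> 'v set \<Rightarrow> ('e \<Rightarrow> 'v vstate)
     \<Rightarrow> 'v set set \<Rightarrow> 'e set \<Rightarrow> bool" where
  "reduced_steiner_tree V E Es ends T \<sigma> \<equiv>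
     steiner_tree (red_V V ends Es \<sigma>) (red_E V E ends Es \<sigma>) (red_ends ends Es \<sigma>)
       (red_T T ends Es \<sigma>)"

abbreviation reduced_opt ::
  "'v set \<Rightarrow> 'e set \<Rightarrow> 'e set \<Rightarrow> ('e \<Rightarrow> 'v set) \<Rightarrow> ('e \<Rightarrow> real) \<Rightarrow> 'v set
     \<Rightarrow> ('e \<Rightarrow> 'v vstate) \<Rightarrow> ereal" where
  "reduced_opt V E Es ends w T \<sigma> \<equiv>
     st_opt (red_V V ends Es \<sigma>) (red_E V E ends Es \<sigma>) (red_ends ends Es \<sigma>) w (red_T T ends Es \<sigma>)"

lemma card_assignments:
  assumes "finite Es" and "\<forall>e\<in>Es. card (ends e) = 2"
  shows "card (assignments ends Es) = 4 ^ card Es"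
proof -
  have "card (Side ` ends e \<union> {Dis, Con}) = 4" if "e \<in> Es" for e
  proof -
    have "card (Side ` ends e) = 2" using assms(2) that by (simp add: card_image inj_on_def)
    moreover from this have "finite (Side ` ends e)" by (intro card_ge_0_finite) simp
    ultimately show ?thesis by (simp add: card_insert_if image_iff)
  qed
  then have "card (assignments ends Es) = (\<Prod>e\<in>Es. 4)"
    unfolding assignments_def using assms(1) by (simp add: card_PiE)
  then show ?thesis by simp
qed

lemma multigraph_reduced:
  assumes "finite V" and "finite E"
  shows "multigraph (red_V V ends Es \<sigma>) (red_E V E ends Es \<sigma>) (red_ends ends Es \<sigma>)"
proof -
  have "red_V V ends Es \<sigma> \<subseteq> cls ends Es \<sigma> ` V" unfolding red_V_def by auto
  then have "finite (red_V V ends Es \<sigma>)" using assms(1) by (meson finite_surj)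
  then show ?thesis using assms(2) unfolding multigraph_def red_E_def by auto
qed

lemma card_red_T_le:
  assumes "finite T" and "finite Es" and "\<forall>e\<in>Es. card (ends e) = 2"
  shows "card (red_T T ends Es \<sigma>) \<le> card T + 2 * card Es"
proof -
  let ?f = "\<lambda>e. case \<sigma> e of Side x \<Rightarrow> {x} | _ \<Rightarrow> ends e"
  have f: "finite (?f e) \<and> card (?f e) \<le> 2" if "e \<in> Es" for e
    using assms(3) that by (cases "\<sigma> e") (auto intro: card_ge_0_finite)
  have "card (virt_terms ends Es \<sigma>) \<le> (\<Sum>e\<in>Es. card (?f e))"
    unfolding virt_terms_def by (rule card_UN_le[OF assms(2)])
  also have "\<dots> \<le> 2 * card Es"
    using sum_mono[of Es "\<lambda>e. card (?f e)" "\<lambda>_. 2"] f by simp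
  finally have virt: "card (virt_terms ends Es \<sigma>) \<le> 2 * card Es" .
  have "finite (virt_terms ends Es \<sigma>)" unfolding virt_terms_def using assms(2) f by blast
  then have "card (red_T T ends Es \<sigma>) \<le> card (T \<union> virt_terms ends Es \<sigma>)"
    unfolding red_T_def using assms(1) by (intro card_image_le) simp
  also have "\<dots> \<le> card T + card (virt_terms ends Es \<sigma>)" by (rule card_Un_le)
  finally show ?thesis using virt by simp
qed

lemma mem_red_V:
  "A \<in> red_V V ends Es \<sigma> \<longleftrightarrow> \<not> has_cycle ends (con_edges Es \<sigma>) \<and>
     (\<exists>x\<in>V. A = cls ends Es \<sigma> x \<and> cls ends Es \<sigma> x \<inter> deleted ends Es \<sigma> = {})"
  by (auto simp: red_V_def)

lemma cls_image_subset_red_V: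
  assumes "U \<subseteq> V" and "\<not> has_cycle ends (con_edges Es \<sigma>)"
    and "\<forall>e\<in>con_edges Es \<sigma>. ends e \<subseteq> U" and "deleted ends Es \<sigma> \<inter> U = {}"
  shows "cls ends Es \<sigma> ` U \<subseteq> red_V V ends Es \<sigma>"
proof
  fix A assume "A \<in> cls ends Es \<sigma> ` U"
  then obtain x where x: "x \<in> U" "A = cls ends Es \<sigma> x" by blast
  have "cls ends Es \<sigma> x \<subseteq> U" using x(1) assms(3) by (rule cls_subset)
  then show "A \<in> red_V V ends Es \<sigma>" using assms(1,2,4) x unfolding mem_red_V by blast
qed

lemma virt_terms_of_edge:
  "e \<in> Es \<Longrightarrow> (case \<sigma> e of Side x \<Rightarrow> {x} | _ \<Rightarrow> ends e) \<subseteq> virt_terms ends Es \<sigma>"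
  unfolding virt_terms_def by blast

lemma virt_terms_meets_edge:
  assumes "\<sigma> \<in> assignments ends Es" and "e \<in> Es" and "ends e \<noteq> {}"
  shows "ends e \<inter> virt_terms ends Es \<sigma> \<noteq> {}"
proof -
  have "\<sigma> e \<in> Side ` ends e \<union> {Dis, Con}" using assms(1,2) unfolding assignments_def by auto
  then have "(case \<sigma> e of Side x \<Rightarrow> {x} | _ \<Rightarrow> ends e) \<inter> ends e \<noteq> {}" using assms(3) by auto
  then show ?thesis using virt_terms_of_edge[where \<sigma> = \<sigma> and ends = ends, OF assms(2)] by blast
qed

section \<open>From solutions to reduced Steiner trees\<close>

definition solution_assignment ::
  "('e \<Rightarrow> 'v set) \<Rightarrow> 'e set \<Rightarrow> 'v set \<Rightarrow> 'e set \<Rightarrow> 'e \<Rightarrow> 'v vstate" where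
  "solution_assignment ends Es U S = restrict (vstate_of ends U S) Es"

lemma solution_assignment_properties:
  assumes "\<forall>e\<in>Es. card (ends e) = 2" and "vest_solution V E Es ends T U S"
  defines "\<sigma> \<equiv> solution_assignment ends Es U S"
  shows "\<sigma> \<in> assignments ends Es" and "con_edges Es \<sigma> = S \<inter> Es"
    and "deleted ends Es \<sigma> \<inter> U = {}" and "virt_terms ends Es \<sigma> \<subseteq> U"
proof -
  have meet: "ends e \<inter> U \<noteq> {}" and endsS: "e \<in> S \<Longrightarrow> ends e \<subseteq> U" if "e \<in> Es" for e
    using assms(2) that unfolding vest_solution_def is_tree_def by auto
  have \<sigma>: "\<sigma> e = vstate_of ends U S e" if "e \<in> Es" for e
    using that by (simp add: \<sigma>_def solution_assignment_def)
  have state: "(e \<in> S \<and> \<sigma> e = Con) \<or> (e \<notin> S \<and> ends e \<subseteq> U \<and> \<sigma> e = Dis) \<or>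
      (\<exists>x y. ends e = {x, y} \<and> x \<in> U \<and> y \<notin> U \<and> e \<notin> S \<and> \<sigma> e = Side x)"
    if "e \<in> Es" for e
    by (cases rule: vstate_of_cases[of ends e U S]) (use assms(1) meet that \<sigma> in auto)
  show "\<sigma> \<in> assignments ends Es"
    unfolding assignments_def
  proof (rule PiE_I)
    show "\<sigma> e \<in> Side ` ends e \<union> {Dis, Con}" if "e \<in> Es" for e
      using state[OF that] by auto
  qed (simp add: \<sigma>_def solution_assignment_def)
  show "con_edges Es \<sigma> = S \<inter> Es"
    unfolding con_edges_def using state by fastforce
  show "deleted ends Es \<sigma> \<inter> U = {}"
    unfolding deleted_def using state by fastforce
  show "virt_terms ends Es \<sigma> \<subseteq> U"
    unfolding virt_terms_def using state endsS by fastforce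
qed

lemma rtrancl_contract:
  assumes "(a, b) \<in> (adj ends S)\<^sup>*" and "S \<subseteq> E \<union> Es" and "S \<inter> Es \<subseteq> con_edges Es \<sigma>"
  shows "(cls ends Es \<sigma> a, cls ends Es \<sigma> b)
    \<in> (adj (red_ends ends Es \<sigma>) {e \<in> S \<inter> E. card (red_ends ends Es \<sigma> e) = 2})\<^sup>*"
proof (rule rtrancl_map[OF _ assms(1)])
  let ?cl = "cls ends Es \<sigma>" and ?ends = "red_ends ends Es \<sigma>"
  fix a b assume "(a, b) \<in> adj ends S"
  then obtain e where e: "e \<in> S" "ends e = {a, b}" unfolding adj_def by auto
  show "(?cl a, ?cl b) \<in> (adj ?ends {e \<in> S \<inter> E. card (?ends e) = 2})\<^sup>*"
  proof (cases "?cl a = ?cl b")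
    case False
    have "e \<notin> Es"
    proof
      assume "e \<in> Es"
      then have "(a, b) \<in> adj ends (con_edges Es \<sigma>)" using e assms(3) unfolding adj_def by auto
      then have "?cl b = ?cl a" by (intro cls_eq) (simp add: cls_mem)
      with False show False by simp
    qed
    moreover have ends: "?ends e = {?cl a, ?cl b}" using e unfolding red_ends_def by auto
    ultimately have "e \<in> {e \<in> S \<inter> E. card (?ends e) = 2}" using e assms(2) False by auto
    then have "(?cl a, ?cl b) \<in> adj ?ends {e \<in> S \<inter> E. card (?ends e) = 2}"
      using ends unfolding adj_def by blast
    then show ?thesis by (rule r_into_rtrancl)
  qed simp
qed

lemma reduced_tree_of_solution:
  assumes mg: "multigraph V (E \<union> Es) ends" and sol: "vest_solution V E Es ends T U S"
  defines "\<sigma> \<equiv> solution_assignment ends Es U S"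
  obtains S0 where "S0 \<subseteq> S \<inter> E" and "reduced_steiner_tree V E Es ends T \<sigma> (cls ends Es \<sigma> ` U) S0"
proof -
  from sol have tree: "is_tree ends U S" and UV: "U \<subseteq> V" and SE: "S \<subseteq> E \<union> Es"
    and TU: "T \<subseteq> U"
    unfolding vest_solution_def by auto
  from tree have endsS: "\<forall>e\<in>S. ends e \<subseteq> U" and finite: "finite U" "U \<noteq> {}" "finite S"
    and conn: "\<forall>x\<in>U. \<forall>y\<in>U. (x, y) \<in> (adj ends S)\<^sup>*"
    unfolding is_tree_def by auto
  have card2: "\<forall>e\<in>Es. card (ends e) = 2" using mg unfolding multigraph_def by auto
  note \<sigma> = solution_assignment_properties[OF card2 sol, folded \<sigma>_def]
  let ?cl = "cls ends Es \<sigma>" and ?ends = "red_ends ends Es \<sigma>"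
  define S' where "S' = {e \<in> S \<inter> E. card (?ends e) = 2}"
  have "\<not> has_cycle ends (con_edges Es \<sigma>)"
    using tree has_cycle_mono \<sigma>(2) unfolding is_tree_def by blast
  moreover have "\<forall>e\<in>con_edges Es \<sigma>. ends e \<subseteq> U" using endsS \<sigma>(2) by auto
  ultimately have U'V: "?cl ` U \<subseteq> red_V V ends Es \<sigma>"
    by (rule cls_image_subset_red_V[OF UV _ _ \<sigma>(3)])
  have ends': "\<forall>e\<in>S'. ?ends e \<subseteq> ?cl ` U"
    using endsS unfolding S'_def red_ends_def by blast
  have S'E: "S' \<subseteq> red_E V E ends Es \<sigma>"
    using ends' U'V unfolding S'_def red_E_def by blast
  have T': "red_T T ends Es \<sigma> \<subseteq> ?cl ` U"
    using TU \<sigma>(4) unfolding red_T_def by blast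
  have "S \<inter> Es \<subseteq> con_edges Es \<sigma>" using \<sigma>(2) by simp
  note contract = rtrancl_contract[OF _ SE this]
  have conn': "\<forall>A\<in>?cl ` U. \<forall>B\<in>?cl ` U. (A, B) \<in> (adj ?ends S')\<^sup>*"
  proof (intro ballI)
    fix A B assume "A \<in> ?cl ` U" "B \<in> ?cl ` U"
    then obtain x y where xy: "x \<in> U" "y \<in> U" and "A = ?cl x" "B = ?cl y" by blast
    moreover have "(x, y) \<in> (adj ends S)\<^sup>*" using conn xy by blast
    ultimately show "(A, B) \<in> (adj ?ends S')\<^sup>*" using contract unfolding S'_def by simp
  qed
  have "finite (?cl ` U)" "?cl ` U \<noteq> {}" "finite S'"
    using finite unfolding S'_def by auto
  then obtain S0 where S0: "S0 \<subseteq> S'" "is_tree ?ends (?cl ` U) S0"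
    by (rule spanning_tree_subset[OF _ _ _ ends' conn' empty_subsetI not_has_cycle_empty])
      (rule that)
  have "reduced_steiner_tree V E Es ends T \<sigma> (?cl ` U) S0"
    using S0(2) U'V S'E S0(1) T' unfolding steiner_tree_def by blast
  moreover have "S0 \<subseteq> S \<inter> E" using S0(1) unfolding S'_def by blast
  ultimately show thesis using that by blast
qed

lemma reduced_opt_le_vest_cost:
  assumes "multigraph V (E \<union> Es) ends" and "\<forall>e\<in>E. 0 \<le> w e"
    and sol: "vest_solution V E Es ends T U S"
  shows "\<exists>\<sigma>\<in>assignments ends Es.
    reduced_opt V E Es ends w T \<sigma> + ereal (\<Sum>e\<in>Es. wv e (\<sigma> e))
      \<le> ereal (vest_cost E Es ends w wv U S)"
proof
  define \<sigma> where "\<sigma> = solution_assignment ends Es U S"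
  have card2: "\<forall>e\<in>Es. card (ends e) = 2" using assms(1) unfolding multigraph_def by auto
  show "\<sigma> \<in> assignments ends Es"
    using solution_assignment_properties(1)[OF card2 sol] by (simp add: \<sigma>_def)
  obtain S0 where S0: "S0 \<subseteq> S \<inter> E" "reduced_steiner_tree V E Es ends T \<sigma> (cls ends Es \<sigma> ` U) S0"
    using reduced_tree_of_solution[OF assms(1) sol] unfolding \<sigma>_def by blast
  have "finite S" using sol unfolding vest_solution_def is_tree_def by blast
  have "reduced_opt V E Es ends w T \<sigma> \<le> ereal (\<Sum>e\<in>S0. w e)"
    unfolding st_opt_def by (rule INF_lower2[of "(cls ends Es \<sigma> ` U, S0)"]) (use S0 in auto)
  also have "ereal (\<Sum>e\<in>S0. w e) \<le> ereal (\<Sum>e\<in>S \<inter> E. w e)"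
    using S0(1) assms(2) \<open>finite S\<close> by (subst ereal_less_eq(3), intro sum_mono2) auto
  finally have "reduced_opt V E Es ends w T \<sigma> + ereal (\<Sum>e\<in>Es. wv e (\<sigma> e))
      \<le> ereal (\<Sum>e\<in>S \<inter> E. w e) + ereal (\<Sum>e\<in>Es. wv e (\<sigma> e))"
    by (rule add_right_mono)
  also have "\<dots> = ereal (vest_cost E Es ends w wv U S)"
    by (simp add: vest_cost_def \<sigma>_def solution_assignment_def)
  finally show "reduced_opt V E Es ends w T \<sigma> + ereal (\<Sum>e\<in>Es. wv e (\<sigma> e))
      \<le> ereal (vest_cost E Es ends w wv U S)" .
qed

section \<open>From reduced Steiner trees to solutions\<close>

lemma rtrancl_expand_contracted:
  assumes "\<forall>e\<in>S'. card (ends e) = 2"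
    and "(cls ends Es \<sigma> x, cls ends Es \<sigma> y) \<in> (adj (red_ends ends Es \<sigma>) S')\<^sup>*"
  shows "(x, y) \<in> (adj ends (S' \<union> con_edges Es \<sigma>))\<^sup>*"
proof (rule rtrancl_reflect[where f = "cls ends Es \<sigma>", OF _ _ assms(2)])
  let ?R = "adj ends (S' \<union> con_edges Es \<sigma>)"
  fix A B assume "(A, B) \<in> adj (red_ends ends Es \<sigma>) S'"
  then obtain e where e: "e \<in> S'" "cls ends Es \<sigma> ` ends e = {A, B}"
    unfolding adj_def red_ends_def by auto
  obtain p q where pq: "ends e = {p, q}" using assms(1) e(1) by (meson card_2_iff)
  then have "(p, q) \<in> ?R" "(q, p) \<in> ?R" using e(1) unfolding adj_def by (auto simp: insert_commute)
  moreover have "{cls ends Es \<sigma> p, cls ends Es \<sigma> q} = {A, B}" using e(2) pq by simp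
  then have "(A, B) = (cls ends Es \<sigma> p, cls ends Es \<sigma> q) \<or>
      (A, B) = (cls ends Es \<sigma> q, cls ends Es \<sigma> p)"
    by (simp add: doubleton_eq_iff) blast
  ultimately show "\<exists>p q. A = cls ends Es \<sigma> p \<and> B = cls ends Es \<sigma> q \<and> (p, q) \<in> ?R\<^sup>*"
    by blast
next
  fix p q assume "cls ends Es \<sigma> p = cls ends Es \<sigma> q"
  then show "(p, q) \<in> (adj ends (S' \<union> con_edges Es \<sigma>))\<^sup>*"
    by (intro rtrancl_adj_mono[OF _ rtrancl_con_edges_if_cls_eq]) auto
qed

lemma vstate_of_eq_assignment:
  assumes "\<forall>e\<in>Es. card (ends e) = 2" and "\<sigma> \<in> assignments ends Es"
    and "virt_terms ends Es \<sigma> \<subseteq> U" and "deleted ends Es \<sigma> \<inter> U = {}"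
    and "S \<inter> Es = con_edges Es \<sigma>" and "e \<in> Es"
  shows "vstate_of ends U S e = \<sigma> e"
proof -
  have in_S: "e \<in> S \<longleftrightarrow> \<sigma> e = Con" using assms(5,6) unfolding con_edges_def by blast
  have "\<sigma> e \<in> Side ` ends e \<union> {Dis, Con}"
    using assms(2,6) unfolding assignments_def by auto
  then consider (Side) x where "x \<in> ends e" "\<sigma> e = Side x" | (Dis) "\<sigma> e = Dis" | (Con) "\<sigma> e = Con"
    by auto
  then show ?thesis
  proof cases
    case Side
    obtain p q where "ends e = {p, q}" "p \<noteq> q" using assms(1,6) by (meson card_2_iff)
    then obtain y where y: "ends e = {x, y}" "y \<noteq> x" using Side(1) by (auto simp: insert_commute)
    have "y \<notin> U" using assms(4,6) Side y unfolding deleted_def by auto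
    moreover have "x \<in> U"
      using virt_terms_of_edge[where \<sigma> = \<sigma> and ends = ends, OF assms(6)] Side(2) assms(3) by auto
    moreover have "e \<notin> S" using in_S Side(2) by simp
    ultimately have "vstate_of ends U S e = Side x" using y(1) by (intro vstate_of_Side)
    then show ?thesis using Side(2) by simp
  next
    case Dis
    have "ends e \<subseteq> virt_terms ends Es \<sigma>"
      using virt_terms_of_edge[where \<sigma> = \<sigma> and ends = ends, OF assms(6)] Dis by simp
    moreover have "e \<notin> S" using in_S Dis by simp
    ultimately show ?thesis using assms(3) Dis unfolding vstate_of_def by auto
  next
    case Con
    then have "e \<in> S" using in_S by simp
    then show ?thesis using Con unfolding vstate_of_def by simp
  qed
qed

lemma cls_eq_of_mem_red_V:
  assumes "A \<in> red_V V ends Es \<sigma>" and "a \<in> A"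
  shows "cls ends Es \<sigma> a = A"
proof -
  obtain x where "A = cls ends Es \<sigma> x" using assms(1) unfolding mem_red_V by blast
  then show ?thesis using cls_eq[of a ends Es \<sigma> x] assms(2) by simp
qed

lemma union_of_reduced_tree:
  assumes mg: "multigraph V (E \<union> Es) ends"
    and st: "reduced_steiner_tree V E Es ends T \<sigma> U' S'"
  shows "\<Union>U' \<subseteq> V" and "\<Union>U' \<noteq> {}" and "T \<union> virt_terms ends Es \<sigma> \<subseteq> \<Union>U'"
    and "deleted ends Es \<sigma> \<inter> \<Union>U' = {}" and "\<not> has_cycle ends (con_edges Es \<sigma>)"
proof -
  let ?cl = "cls ends Es \<sigma>"
  from st have U'V: "U' \<subseteq> red_V V ends Es \<sigma>" and T': "red_T T ends Es \<sigma> \<subseteq> U'"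
    and "U' \<noteq> {}"
    unfolding steiner_tree_def is_tree_def by auto
  then show "\<not> has_cycle ends (con_edges Es \<sigma>)" by (auto simp: mem_red_V)
  have classes: "\<exists>x\<in>V. A = ?cl x \<and> ?cl x \<inter> deleted ends Es \<sigma> = {}" if "A \<in> U'" for A
  proof -
    have "A \<in> red_V V ends Es \<sigma>" using that U'V by blast
    then show ?thesis unfolding mem_red_V by blast
  qed
  have endsV: "\<forall>e\<in>con_edges Es \<sigma>. ends e \<subseteq> V"
    using mg unfolding multigraph_def con_edges_def by auto
  show "\<Union>U' \<subseteq> V"
  proof
    fix a assume "a \<in> \<Union>U'"
    then obtain A where A: "A \<in> U'" "a \<in> A" by blast
    then obtain x where "x \<in> V" "A = ?cl x" using classes by blast
    then show "a \<in> V" using cls_subset[OF _ endsV] A(2) by blast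
  qed
  obtain A where "A \<in> U'" using \<open>U' \<noteq> {}\<close> by blast
  then obtain x where "A = ?cl x" using classes by blast
  then have "x \<in> A" by (simp add: cls_refl)
  then show "\<Union>U' \<noteq> {}" using \<open>A \<in> U'\<close> by blast
  have "z \<in> \<Union>U'" if "?cl z \<in> U'" for z
    using that cls_refl[of z ends Es \<sigma>] by blast
  then show "T \<union> virt_terms ends Es \<sigma> \<subseteq> \<Union>U'" using T' unfolding red_T_def by blast
  show "deleted ends Es \<sigma> \<inter> \<Union>U' = {}" using classes by blast
qed

lemma ends_subset_union_of_reduced_tree:
  assumes mg: "multigraph V (E \<union> Es) ends"
    and st: "reduced_steiner_tree V E Es ends T \<sigma> U' S'" and e: "e \<in> S' \<union> con_edges Es \<sigma>"
  shows "ends e \<subseteq> \<Union>U'"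
proof (cases "e \<in> S'")
  case True
  then have "red_ends ends Es \<sigma> e \<subseteq> U'" using st unfolding steiner_tree_def is_tree_def by blast
  show ?thesis
  proof
    fix p assume "p \<in> ends e"
    then have "cls ends Es \<sigma> p \<in> U'" using \<open>red_ends ends Es \<sigma> e \<subseteq> U'\<close>
      unfolding red_ends_def by blast
    then show "p \<in> \<Union>U'" using cls_refl[of p ends Es \<sigma>] by blast
  qed
next
  case False
  then have "e \<in> Es" "\<sigma> e = Con" using e unfolding con_edges_def by auto
  then have "ends e \<subseteq> virt_terms ends Es \<sigma>"
    using virt_terms_of_edge[where \<sigma> = \<sigma> and ends = ends] by fastforce
  then show ?thesis using union_of_reduced_tree(3)[OF mg st] by blast
qed

lemma connected_union_of_reduced_tree:
  assumes mg: "multigraph V (E \<union> Es) ends"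
    and st: "reduced_steiner_tree V E Es ends T \<sigma> U' S'" and "u \<in> \<Union>U'" and "v \<in> \<Union>U'"
  shows "(u, v) \<in> (adj ends (S' \<union> con_edges Es \<sigma>))\<^sup>*"
proof -
  from st have tree: "is_tree (red_ends ends Es \<sigma>) U' S'" and U'V: "U' \<subseteq> red_V V ends Es \<sigma>"
    and S'E: "S' \<subseteq> red_E V E ends Es \<sigma>"
    unfolding steiner_tree_def by auto
  have card2: "\<forall>e\<in>S'. card (ends e) = 2"
    using mg S'E unfolding multigraph_def red_E_def by auto
  obtain A B where A: "A \<in> U'" "u \<in> A" and B: "B \<in> U'" "v \<in> B" using assms(3,4) by blast
  moreover have "cls ends Es \<sigma> u = A" using cls_eq_of_mem_red_V[OF subsetD[OF U'V A(1)] A(2)] .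
  moreover have "cls ends Es \<sigma> v = B" using cls_eq_of_mem_red_V[OF subsetD[OF U'V B(1)] B(2)] .
  ultimately have "(cls ends Es \<sigma> u, cls ends Es \<sigma> v) \<in> (adj (red_ends ends Es \<sigma>) S')\<^sup>*"
    using tree unfolding is_tree_def by blast
  then show ?thesis by (rule rtrancl_expand_contracted[OF card2])
qed

lemma solution_of_reduced_tree:
  assumes mg: "multigraph V (E \<union> Es) ends" and disj: "E \<inter> Es = {}"
    and \<sigma>: "\<sigma> \<in> assignments ends Es" and st: "reduced_steiner_tree V E Es ends T \<sigma> U' S'"
  obtains S0 where "vest_solution V E Es ends T (\<Union>U') S0" and "S0 \<inter> E \<subseteq> S'"
    and "\<forall>e\<in>Es. vstate_of ends (\<Union>U') S0 e = \<sigma> e"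
proof -
  let ?U = "\<Union>U'" and ?C = "con_edges Es \<sigma>"
  note U = union_of_reduced_tree[OF mg st]
  have S'E: "S' \<subseteq> E" and "finite S'"
    using st unfolding steiner_tree_def is_tree_def red_E_def by auto
  have CEs: "?C \<subseteq> Es" unfolding con_edges_def by auto
  have card2: "\<forall>e\<in>Es. card (ends e) = 2" and "finite Es"
    using mg unfolding multigraph_def by auto
  have finSC: "finite (S' \<union> ?C)" using \<open>finite S'\<close> \<open>finite Es\<close> CEs by (auto intro: finite_subset)
  have finU: "finite ?U" using U(1) mg unfolding multigraph_def by (auto intro: finite_subset)
  have ends: "\<forall>e\<in>S' \<union> ?C. ends e \<subseteq> ?U" using ends_subset_union_of_reduced_tree[OF mg st] by blast
  have conn: "\<forall>u\<in>?U. \<forall>v\<in>?U. (u, v) \<in> (adj ends (S' \<union> ?C))\<^sup>*"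
    using connected_union_of_reduced_tree[OF mg st] by blast
  obtain S0 where S0: "?C \<subseteq> S0" "S0 \<subseteq> S' \<union> ?C" "is_tree ends ?U S0"
    by (rule spanning_tree_subset[OF finU U(2) finSC ends conn Un_upper2 U(5)])
  have virtU: "virt_terms ends Es \<sigma> \<subseteq> ?U" and TU: "T \<subseteq> ?U" using U(3) by auto
  have "S0 \<inter> Es = ?C" using S0(1,2) S'E disj CEs by blast
  then have states: "\<forall>e\<in>Es. vstate_of ends ?U S0 e = \<sigma> e"
    using vstate_of_eq_assignment[OF card2 \<sigma> virtU U(4)] by blast
  have "ends e \<inter> ?U \<noteq> {}" if "e \<in> Es" for e
  proof -
    have "ends e \<noteq> {}" using card2 that by force
    then show ?thesis using virt_terms_meets_edge[OF \<sigma> that] virtU by blast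
  qed
  moreover have "S0 \<subseteq> E \<union> Es" using S0(2) S'E CEs by blast
  ultimately have "vest_solution V E Es ends T ?U S0"
    using S0(3) U(1) TU unfolding vest_solution_def by blast
  moreover have "S0 \<inter> E \<subseteq> S'" using S0(2) disj CEs by blast
  ultimately show thesis using that states by blast
qed

lemma vest_opt_le_reduced_tree_cost:
  assumes "multigraph V (E \<union> Es) ends" and "E \<inter> Es = {}" and "\<forall>e\<in>E. 0 \<le> w e"
    and "\<sigma> \<in> assignments ends Es" and "reduced_steiner_tree V E Es ends T \<sigma> U' S'"
  shows "vest_opt V E Es ends w wv T \<le> ereal ((\<Sum>e\<in>S'. w e) + (\<Sum>e\<in>Es. wv e (\<sigma> e)))"
proof -
  obtain S0 where sol: "vest_solution V E Es ends T (\<Union>U') S0" and "S0 \<inter> E \<subseteq> S'"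
    and states: "\<forall>e\<in>Es. vstate_of ends (\<Union>U') S0 e = \<sigma> e"
    using solution_of_reduced_tree[OF assms(1,2,4,5)] by blast
  have "finite S'" and "S' \<subseteq> E"
    using assms(5) unfolding steiner_tree_def is_tree_def red_E_def by auto
  have "vest_opt V E Es ends w wv T \<le> ereal (vest_cost E Es ends w wv (\<Union>U') S0)"
    unfolding vest_opt_def by (rule INF_lower2[of "(\<Union>U', S0)"]) (use sol in auto)
  also have "\<dots> \<le> ereal ((\<Sum>e\<in>S'. w e) + (\<Sum>e\<in>Es. wv e (\<sigma> e)))"
    using \<open>S0 \<inter> E \<subseteq> S'\<close> \<open>finite S'\<close> \<open>S' \<subseteq> E\<close> assms(3) states
    unfolding vest_cost_def by (auto intro!: sum_mono2)
  finally show ?thesis .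
qed

lemma le_INF_ereal_add_const:
  assumes "\<And>x. x \<in> A \<Longrightarrow> a \<le> ereal (f x + c)" and "\<And>x. x \<in> A \<Longrightarrow> 0 \<le> f x"
  shows "a \<le> (INF x\<in>A. ereal (f x)) + ereal c"
proof (cases "A = {}")
  case True
  then show ?thesis by (simp add: top_ereal_def)
next
  case False
  have "a \<le> (INF x\<in>A. ereal (f x) + ereal c)" using assms(1) by (auto intro!: INF_greatest)
  also have "\<dots> = (INF x\<in>A. ereal (f x)) + ereal c"
    by (rule INF_ereal_add_left) (use False assms(2) in auto)
  finally show ?thesis .
qed

lemma vest_opt_le_reduced_opt:
  assumes "multigraph V (E \<union> Es) ends" and "E \<inter> Es = {}" and "\<forall>e\<in>E. 0 \<le> w e"
    and "\<sigma> \<in> assignments ends Es"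
  shows "vest_opt V E Es ends w wv T \<le> reduced_opt V E Es ends w T \<sigma> + ereal (\<Sum>e\<in>Es. wv e (\<sigma> e))"
  unfolding st_opt_def
proof (rule le_INF_ereal_add_const)
  fix US assume "US \<in> {(U', S'). reduced_steiner_tree V E Es ends T \<sigma> U' S'}"
  then have st: "reduced_steiner_tree V E Es ends T \<sigma> (fst US) (snd US)" by auto
  then show "vest_opt V E Es ends w wv T \<le> ereal ((\<Sum>e\<in>snd US. w e) + (\<Sum>e\<in>Es. wv e (\<sigma> e)))"
    by (rule vest_opt_le_reduced_tree_cost[OF assms])
  have "snd US \<subseteq> E" using st unfolding steiner_tree_def red_E_def by auto
  then show "0 \<le> (\<Sum>e\<in>snd US. w e)" using assms(3) by (intro sum_nonneg) auto
qed

lemma INF_reduced_opt_le_vest_opt: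
  assumes "multigraph V (E \<union> Es) ends" and "\<forall>e\<in>E. 0 \<le> w e"
  shows "(INF \<sigma>\<in>assignments ends Es. reduced_opt V E Es ends w T \<sigma> + ereal (\<Sum>e\<in>Es. wv e (\<sigma> e)))
    \<le> vest_opt V E Es ends w wv T"
  unfolding vest_opt_def
proof (rule INF_greatest)
  fix US assume "US \<in> {(U, S). vest_solution V E Es ends T U S}"
  then have "vest_solution V E Es ends T (fst US) (snd US)" by auto
  then obtain \<sigma> where \<sigma>: "\<sigma> \<in> assignments ends Es" and le:
    "reduced_opt V E Es ends w T \<sigma> + ereal (\<Sum>e\<in>Es. wv e (\<sigma> e))
      \<le> ereal (vest_cost E Es ends w wv (fst US) (snd US))"
    using reduced_opt_le_vest_cost[OF assms] by blast
  show "(INF \<sigma>\<in>assignments ends Es. reduced_opt V E Es ends w T \<sigma> + ereal (\<Sum>e\<in>Es. wv e (\<sigma> e)))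
    \<le> ereal (vest_cost E Es ends w wv (fst US) (snd US))"
    using le by (rule INF_lower2[OF \<sigma>])
qed

theorem mainTheorem3:
  fixes V :: "'v set" and E Es :: "'e set" and ends :: "'e \<Rightarrow> 'v set"
    and w :: "'e \<Rightarrow> real" and wv :: "'e \<Rightarrow> 'v vstate \<Rightarrow> real" and T :: "'v set"
  assumes "multigraph V (E \<union> Es) ends"
    and "E \<inter> Es = {}"
    and "T \<subseteq> V"
    and "\<forall>e\<in>E. w e \<ge> 0"
    and "\<forall>e\<in>Es. \<forall>s \<in> Side ` ends e \<union> {Dis, Con}. wv e s \<ge> 0"
  shows "card (assignments ends Es) = 4 ^ card Es \<and>
    (\<forall>\<sigma>\<in>assignments ends Es.
       multigraph (red_V V ends Es \<sigma>) (red_E V E ends Es \<sigma>) (red_ends ends Es \<sigma>) \<and>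
       card (red_T T ends Es \<sigma>) \<le> card T + 2 * card Es) \<and>
    vest_opt V E Es ends w wv T =
      (INF \<sigma>\<in>assignments ends Es.
         st_opt (red_V V ends Es \<sigma>) (red_E V E ends Es \<sigma>) (red_ends ends Es \<sigma>) w
                (red_T T ends Es \<sigma>)
         + ereal (\<Sum>e\<in>Es. wv e (\<sigma> e)))"
proof -
  from assms(1) have fin: "finite V" "finite E" "finite Es" and card2: "\<forall>e\<in>Es. card (ends e) = 2"
    unfolding multigraph_def by auto
  have "finite T" using assms(3) fin(1) by (rule finite_subset)
  have "vest_opt V E Es ends w wv T =
      (INF \<sigma>\<in>assignments ends Es. reduced_opt V E Es ends w T \<sigma> + ereal (\<Sum>e\<in>Es. wv e (\<sigma> e)))"
    using vest_opt_le_reduced_opt[OF assms(1,2,4)] INF_reduced_opt_le_vest_opt[OF assms(1,4)]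
    by (intro antisym INF_greatest) auto
  then show ?thesis
    using card_assignments[OF fin(3) card2] multigraph_reduced[OF fin(1,2)]
      card_red_T_le[OF \<open>finite T\<close> fin(3) card2] by simp
qed

end
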